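(* In any execution of Algorithm $\gamma$n-Burst, within any time interval $I^-$ during which at all times at least $n^2$ tasks of cost $\ell_{\min}$ are pending in $\gamma$n-Burst, each $\ell_{\min}$-task has at most one absolute task execution fully contained in $I^-$ (all such absolute task executions appear exactly once).
   Context: Model: $n$ processors with ids $1,\dots,n$ and a shared repository; tasks with ids, arrival times and costs $\ell_{\min}$ or $\ell_{\max}$ ($0<\ell_{\min}<\ell_{\max}$) are injected over time; processors may crash and restart (restarted processors remember only the algorithm and $n$). A task is pending if injected and its completion not yet reported; once reported it is immediately removed. A processor repeatedly obtains the pending set, chooses a task, executes it (a task of cost $\ell$ takes time $\ell/s$ with speedup $s>1$) and reports it; execution is non-preemptive and a crash loses progress. An absolute task execution of $\tau$ is an interval $[t,t']$ in which a processor schedules $\tau$ at $t$ and reports it at $t'$ without stopping in $[t,t')$. Algorithm $\gamma$n-Burst for processor $p$, with $\gamma=\lceil\frac{\ell_{\max}-s\ell_{\min}}{(s-1)\ell_{\min}}\rceil$: counter $c$ set to $0$ on (re)start; each cycle it forms lists $L_{\min},L_{\max}$ of pending tasks of cost $\ell_{\min},\ell_{\max}$ sorted by arrival. Case 1 (both lists $<n^2$): if previous task had cost $\ell_{\min}$, perform task at position $(pn)\bmod|L_{\max}|$ of $L_{\max}$, $c\gets0$; else task at position $(pn)\bmod|L_{\min}|$ of $L_{\min}$, $c\gets\min(c+1,\gamma)$. Case 2 ($|L_{\min}|\ge n^2>|L_{\max}|$): position $pn$ of $L_{\min}$, $c\gets\min(c+1,\gamma)$. Case 3 ($|L_{\max}|\ge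 n^2>|L_{\min}|$): position $pn$ of $L_{\max}$, $c\gets0$. Case 4 (both $\ge n^2$): if $c=\gamma$, position $pn$ of $L_{\max}$, $c\gets0$; else position $pn$ of $L_{\min}$, $c\gets\min(c+1,\gamma)$. Then report the task. *)

theory Defs
  imports Complex_Main "HOL-Library.Product_Lexorder"
begin

record task_env =
  inj  :: "nat set"
  arr  :: "nat \<Rightarrow> real"
  cost :: "nat \<Rightarrow> real"

text \<open>An execution: for every processor p a (finite or infinite, downward closed)
  set of cycle indices K p.  Cycle k of processor p obtains the pending set and
  schedules task tk p k at time st p k; cnew p k is the counter value after the
  choice; dn p k says whether the task was executed without stopping and reported
  (at time st p k + cost/s); rs p k = Some r says that the processor (re)started at
  time r before cycle k (state reset).\<close>
record exec =
  K    :: "nat \<Rightarrow> nat set"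
  st   :: "nat \<Rightarrow> nat \<Rightarrow> real"
  tk   :: "nat \<Rightarrow> nat \<Rightarrow> nat"
  cnew :: "nat \<Rightarrow> nat \<Rightarrow> int"
  dn   :: "nat \<Rightarrow> nat \<Rightarrow> bool"
  rs   :: "nat \<Rightarrow> nat \<Rightarrow> real option"

definition gamma :: "real \<Rightarrow> real \<Rightarrow> real \<Rightarrow> int" where
  "gamma s lmin lmax = \<lceil>(lmax - s * lmin) / ((s - 1) * lmin)\<rceil>"

definition end_time :: "real \<Rightarrow> task_env \<Rightarrow> exec \<Rightarrow> nat \<Rightarrow> nat \<Rightarrow> real" where
  "end_time s T E p k = st E p k + cost T (tk E p k) / s"

definition reported :: "nat \<Rightarrow> real \<Rightarrow> task_env \<Rightarrow> exec \<Rightarrow> nat \<Rightarrow> real \<Rightarrow> bool" where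
  "reported n s T E \<tau> t \<longleftrightarrow>
     (\<exists>p k. p \<in> {1..n} \<and> k \<in> K E p \<and> dn E p k \<and> tk E p k = \<tau> \<and> end_time s T E p k = t)"

definition pending :: "nat \<Rightarrow> real \<Rightarrow> task_env \<Rightarrow> exec \<Rightarrow> real \<Rightarrow> nat set" where
  "pending n s T E t =
     {\<tau> \<in> inj T. arr T \<tau> \<le> t \<and> \<not> (\<exists>t'\<le>t. reported n s T E \<tau> t')}"

definition sorted_by_arrival :: "(nat \<Rightarrow> real) \<Rightarrow> nat set \<Rightarrow> nat list" where
  "sorted_by_arrival a A = map snd (sorted_list_of_set ((\<lambda>\<tau>. (a \<tau>, \<tau>)) ` A))"

definition Lmin_list :: "nat \<Rightarrow> real \<Rightarrow> real \<Rightarrow> task_env \<Rightarrow> exec \<Rightarrow> real \<Rightarrow> nat list" where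
  "Lmin_list n s lmin T E t =
     sorted_by_arrival (arr T) {\<tau> \<in> pending n s T E t. cost T \<tau> = lmin}"

definition Lmax_list :: "nat \<Rightarrow> real \<Rightarrow> real \<Rightarrow> task_env \<Rightarrow> exec \<Rightarrow> real \<Rightarrow> nat list" where
  "Lmax_list n s lmax T E t =
     sorted_by_arrival (arr T) {\<tau> \<in> pending n s T E t. cost T \<tau> = lmax}"

text \<open>One decision of gamma n-Burst for processor p with counter c; prevmin says whether
  the previous task had cost lmin.  List positions: in Case 1
  the 0-based index (p n) mod |L|; in Cases 2--4 "position p n" is the (p n)-th
  element, i.e. 0-based index p n - 1.\<close>
definition burst_choice ::
  "nat \<Rightarrow> int \<Rightarrow> nat \<Rightarrow> int \<Rightarrow> bool \<Rightarrow> nat list \<Rightarrow> nat list \<Rightarrow> (nat \<times> int) option" where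
  "burst_choice n \<gamma> p c prevmin Lmn Lmx =
    (if length Lmn < n^2 \<and> length Lmx < n^2 then
       (if prevmin then
          (if Lmx = [] then None else Some (Lmx ! ((p * n) mod length Lmx), 0))
        else
          (if Lmn = [] then None else Some (Lmn ! ((p * n) mod length Lmn), min (c + 1) \<gamma>)))
     else if n^2 \<le> length Lmn \<and> length Lmx < n^2 then Some (Lmn ! (p * n - 1), min (c + 1) \<gamma>)
     else if n^2 \<le> length Lmx \<and> length Lmn < n^2 then Some (Lmx ! (p * n - 1), 0)
     else if c = \<gamma> then Some (Lmx ! (p * n - 1), 0)
     else Some (Lmn ! (p * n - 1), min (c + 1) \<gamma>))"

definition choice_at ::
  "nat \<Rightarrow> real \<Rightarrow> real \<Rightarrow> real \<Rightarrow> task_env \<Rightarrow> exec \<Rightarrow> nat \<Rightarrow> int \<Rightarrow> bool \<Rightarrow> real \<Rightarrow> (nat \<times> int) option" where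
  "choice_at n s lmin lmax T E p c pm t =
     burst_choice n (gamma s lmin lmax) p c pm (Lmin_list n s lmin T E t) (Lmax_list n s lmax T E t)"

definition c_before :: "exec \<Rightarrow> nat \<Rightarrow> nat \<Rightarrow> int" where
  "c_before E p k = (if rs E p k \<noteq> None then 0 else cnew E p (k - 1))"

definition prev_min :: "real \<Rightarrow> task_env \<Rightarrow> exec \<Rightarrow> nat \<Rightarrow> nat \<Rightarrow> bool" where
  "prev_min lmin T E p k \<longleftrightarrow> rs E p k = None \<and> cost T (tk E p (k - 1)) = lmin"

definition wait_start :: "real \<Rightarrow> task_env \<Rightarrow> exec \<Rightarrow> nat \<Rightarrow> nat \<Rightarrow> real" where
  "wait_start s T E p k = (case rs E p k of Some r \<Rightarrow> r | None \<Rightarrow> end_time s T E p (k - 1))"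

definition valid_exec :: "nat \<Rightarrow> real \<Rightarrow> real \<Rightarrow> real \<Rightarrow> task_env \<Rightarrow> exec \<Rightarrow> bool" where
  "valid_exec n s lmin lmax T E \<longleftrightarrow>
    (\<forall>p. p \<notin> {1..n} \<longrightarrow> K E p = {}) \<and>
    (\<forall>p\<in>{1..n}.
       (\<forall>k\<in>K E p. \<forall>j<k. j \<in> K E p) \<and>
       (0 \<in> K E p \<longrightarrow> rs E p 0 \<noteq> None) \<and>
       (\<forall>k. Suc k \<in> K E p \<longrightarrow>
          (if dn E p k
           then (\<forall>r. rs E p (Suc k) = Some r \<longrightarrow> r > end_time s T E p k)
           else (\<exists>r. rs E p (Suc k) = Some r \<and> r > st E p k))) \<and>
       (\<forall>k\<in>K E p.
          wait_start s T E p k \<le> st E p k \<and>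
          (\<forall>t. wait_start s T E p k \<le> t \<and> t < st E p k \<longrightarrow>
               choice_at n s lmin lmax T E p (c_before E p k) (prev_min lmin T E p k) t = None) \<and>
          choice_at n s lmin lmax T E p (c_before E p k) (prev_min lmin T E p k) (st E p k)
            = Some (tk E p k, cnew E p k)))"

definition abs_exec_in :: "nat \<Rightarrow> real \<Rightarrow> task_env \<Rightarrow> exec \<Rightarrow> real set \<Rightarrow> nat \<Rightarrow> nat \<Rightarrow> nat \<Rightarrow> bool" where
  "abs_exec_in n s T E I \<tau> p k \<longleftrightarrow>
     p \<in> {1..n} \<and> k \<in> K E p \<and> dn E p k \<and> tk E p k = \<tau> \<and>
     {st E p k .. end_time s T E p k} \<subseteq> I"

end

theory Submission
  imports Defs
begin

text \<open>Suppose two cycles, of processors p and q with starts t1 \<le> t2 in the interval, both take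
  the lmin-task \<tau>. Since at least n^2 lmin-tasks are pending, each of them takes \<tau> at index
  p n - 1 resp. q n - 1 of the lmin-list, so exactly p n - 1 resp. q n - 1 pending lmin-tasks
  precede \<tau> at t1 resp. t2. Processor p reports \<tau> at t1 + lmin/s, and \<tau> is still pending at
  t2, so t2 - t1 < lmin/s. Tasks preceding \<tau> at t2 already preceded it at t1; those that left
  in between were reported in (t1, t2], at most once by every processor other than p, because a
  processor's reports are lmin/s apart. Hence q n \<le> p n < q n + n, i.e. p = q, and a single
  processor cannot start \<tau> twice within lmin/s.\<close>

lemma card_less_nth_sorted_wrt:
  fixes xs :: "'a::linorder list"
  assumes "sorted_wrt (<) xs" "i < length xs"
  shows "card {y \<in> set xs. y < xs ! i} = i"
proof -
  have "{y \<in> set xs. y < xs ! i} = set (take i xs)"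
  proof (intro equalityI subsetI)
    fix y assume "y \<in> {y \<in> set xs. y < xs ! i}"
    then obtain j where j: "j < length xs" "y = xs ! j" "xs ! j < xs ! i"
      by (auto simp: in_set_conv_nth)
    have "j < i"
    proof (rule ccontr)
      assume "\<not> j < i"
      then consider "i < j" | "i = j"
        by linarith
      then show False
        using j assms sorted_wrt_nth_less[of "(<)" xs i j] by cases auto
    qed
    then show "y \<in> set (take i xs)"
      using j by (auto simp: in_set_conv_nth)
  next
    fix y assume "y \<in> set (take i xs)"
    then obtain m where m: "m < i" "y = xs ! m"
      by (auto simp: in_set_conv_nth)
    then have "m < length xs"
      using assms(2) by simp
    then show "y \<in> {y \<in> set xs. y < xs ! i}"
      using m assms sorted_wrt_nth_less[of "(<)" xs m i] by simp
  qed
  moreover have "distinct xs"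
    using assms(1) by (simp add: strict_sorted_iff)
  ultimately show ?thesis
    using assms(2) by (simp add: distinct_card)
qed

lemma set_sorted_by_arrival [simp]: "finite A \<Longrightarrow> set (sorted_by_arrival a A) = A"
  unfolding sorted_by_arrival_def by (auto simp: image_image)

lemma length_sorted_by_arrival [simp]: "finite A \<Longrightarrow> length (sorted_by_arrival a A) = card A"
  unfolding sorted_by_arrival_def by (simp add: card_image inj_on_def)

lemma card_before_nth_sorted_by_arrival:
  assumes "finite A" "i < length (sorted_by_arrival a A)"
  defines "x \<equiv> sorted_by_arrival a A ! i"
  shows "card {y \<in> A. (a y, y) < (a x, x)} = i"
proof -
  define f where "f y = (a y, y)" for y
  define xs where "xs = sorted_list_of_set (f ` A)"
  have list: "sorted_by_arrival a A = map snd xs"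
    unfolding xs_def f_def sorted_by_arrival_def by simp
  have i: "i < length xs"
    using assms(2) list by simp
  have "xs ! i \<in> f ` A"
    using i assms(1) unfolding xs_def by (metis nth_mem set_sorted_list_of_set finite_imageI)
  then have xs_i: "xs ! i = f x"
    using i list unfolding x_def f_def by auto
  have image: "f ` {y \<in> A. f y < f x} = {z \<in> set xs. z < xs ! i}"
    using assms(1) xs_i unfolding xs_def by auto
  have "inj_on f {y \<in> A. f y < f x}"
    unfolding f_def inj_on_def by simp
  then have "card {y \<in> A. f y < f x} = card {z \<in> set xs. z < xs ! i}"
    unfolding image[symmetric] by (rule card_image[symmetric])
  also have "\<dots> = i"
    using card_less_nth_sorted_wrt[OF _ i] unfolding xs_def by simp
  finally show ?thesis
    unfolding f_def .
qed

lemma position_less_square: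
  fixes p n :: nat
  assumes "p \<in> {1..n}"
  shows "p * n - 1 < n\<^sup>2"
proof -
  have "p * n \<le> n * n" "0 < p * n"
    using assms by (simp_all add: mult_le_mono1)
  then show ?thesis
    unfolding power2_eq_square by linarith
qed

lemma burst_choice_mem:
  assumes "burst_choice n \<gamma> p c pm Lmn Lmx = Some (x, c')" "p \<in> {1..n}"
  shows "x \<in> set Lmn \<or> x \<in> set Lmx"
  using assms(1) position_less_square[OF assms(2)] unfolding burst_choice_def
  by (auto split: if_splits)

text \<open>A long lmin-list forces Case 2 or Case 4, hence index p n - 1.\<close>
lemma burst_choice_long_min_list:
  assumes "burst_choice n \<gamma> p c pm Lmn Lmx = Some (x, c')" "p \<in> {1..n}"
    and "n\<^sup>2 \<le> length Lmn" "x \<notin> set Lmx"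
  shows "x = Lmn ! (p * n - 1)"
  using assms(1,3,4) position_less_square[OF assms(2)] unfolding burst_choice_def
  by (auto split: if_splits)

lemma eq_of_position_window:
  fixes p q n :: nat
  assumes "p \<in> {1..n}" "q \<in> {1..n}"
    and "q * n - 1 \<le> p * n - 1" "(p * n - 1) - (q * n - 1) \<le> n - 1"
  shows "p = q"
proof -
  have pos: "0 < n" "0 < p * n" "0 < q * n"
    using assms(1,2) by auto
  have "q * n \<le> p * n" "p * n < q * n + n"
    using pos assms(3,4) by linarith+
  then have "q \<le> p" "p * n < Suc q * n"
    using pos(1) by simp_all
  moreover from this(2) have "p < Suc q"
    using mult_less_cancel2[of p n "Suc q"] by blast
  ultimately show ?thesis
    by simp
qed

locale burst_execution =
  fixes n :: nat and s lmin lmax :: real and T :: task_env and E :: exec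
  assumes s_gt_1: "s > 1"
    and lmin_pos: "0 < lmin"
    and lmin_less_lmax: "lmin < lmax"
    and cost_cases: "\<tau> \<in> inj T \<Longrightarrow> cost T \<tau> = lmin \<or> cost T \<tau> = lmax"
    and finite_arrived: "finite {\<tau> \<in> inj T. arr T \<tau> \<le> t}"
    and valid: "valid_exec n s lmin lmax T E"
begin

definition lmin_pending :: "real \<Rightarrow> nat set" where
  "lmin_pending t = {\<tau> \<in> pending n s T E t. cost T \<tau> = lmin}"

text \<open>Pairs (arrival, id) compare exactly as the lists of sorted_by_arrival are ordered.\<close>
definition ahead :: "nat \<Rightarrow> real \<Rightarrow> nat set" where
  "ahead \<tau> t = {\<sigma> \<in> lmin_pending t. (arr T \<sigma>, \<sigma>) < (arr T \<tau>, \<tau>)}"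

definition reporting_cycles :: "nat \<Rightarrow> real \<Rightarrow> real \<Rightarrow> nat set" where
  "reporting_cycles r t t' =
     {m \<in> K E r. dn E r m \<and> t < end_time s T E r m \<and> end_time s T E r m \<le> t'}"

lemma lmin_div_s_pos: "0 < lmin / s"
  using lmin_pos s_gt_1 by simp

lemma finite_pending: "finite (pending n s T E t)"
  by (rule finite_subset[OF _ finite_arrived]) (auto simp: pending_def)

lemma finite_lmin_pending: "finite (lmin_pending t)"
  unfolding lmin_pending_def using finite_pending by simp

lemma choice_at_st:
  assumes "p \<in> {1..n}" "k \<in> K E p"
  shows "choice_at n s lmin lmax T E p (c_before E p k) (prev_min lmin T E p k) (st E p k)
           = Some (tk E p k, cnew E p k)"
  using valid assms unfolding valid_exec_def by blast

lemma scheduled_pending: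
  assumes "p \<in> {1..n}" "k \<in> K E p"
  shows "tk E p k \<in> pending n s T E (st E p k)"
  using burst_choice_mem[OF choice_at_st[OF assms, unfolded choice_at_def] assms(1)]
  unfolding Lmin_list_def Lmax_list_def by (auto simp: finite_pending)

lemma st_plus_le_end_time:
  assumes "p \<in> {1..n}" "k \<in> K E p"
  shows "st E p k + lmin / s \<le> end_time s T E p k"
proof -
  have "lmin \<le> cost T (tk E p k)"
    using scheduled_pending[OF assms] cost_cases lmin_less_lmax by (force simp: pending_def)
  then show ?thesis
    using s_gt_1 unfolding end_time_def by (simp add: divide_right_mono)
qed

lemma pending_before_report:
  assumes "\<tau> \<in> pending n s T E t" "reported n s T E \<tau> t'"
  shows "t < t'"
proof (rule ccontr)
  assume "\<not> t < t'"
  then have "t' \<le> t"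
    by simp
  then show False
    using assms unfolding pending_def by blast
qed

lemma st_Suc:
  assumes "p \<in> {1..n}" "Suc k \<in> K E p"
  shows "st E p k < st E p (Suc k)"
    and "dn E p k \<Longrightarrow> end_time s T E p k \<le> st E p (Suc k)"
proof -
  have k: "k \<in> K E p"
    using valid assms unfolding valid_exec_def by blast
  have "st E p k < end_time s T E p k"
    using st_plus_le_end_time[OF assms(1) k] lmin_div_s_pos by linarith
  moreover have "wait_start s T E p (Suc k) \<le> st E p (Suc k)"
    and "if dn E p k
         then (\<forall>r. rs E p (Suc k) = Some r \<longrightarrow> r > end_time s T E p k)
         else (\<exists>r. rs E p (Suc k) = Some r \<and> r > st E p k)"
    using valid assms unfolding valid_exec_def by blast+
  ultimately show "st E p k < st E p (Suc k)"
    and "dn E p k \<Longrightarrow> end_time s T E p k \<le> st E p (Suc k)"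
    by (auto simp: wait_start_def split: option.splits if_splits)
qed

lemma end_time_le_st_later:
  assumes "p \<in> {1..n}" "m \<in> K E p" "k < m" "dn E p k"
  shows "end_time s T E p k \<le> st E p m"
  using assms(2,3)
proof (induction m)
  case (Suc m)
  show ?case
  proof (cases "k = m")
    case True
    then show ?thesis
      using st_Suc(2)[OF assms(1) _ assms(4)] Suc.prems(1) by simp
  next
    case False
    have "m \<in> K E p"
      using valid assms(1) Suc.prems(1) unfolding valid_exec_def by blast
    then have "end_time s T E p k \<le> st E p m"
      using Suc.IH Suc.prems(2) False by simp
    then show ?thesis
      using st_Suc(1)[OF assms(1) Suc.prems(1)] by simp
  qed
qed simp

lemma end_time_spaced:
  assumes "p \<in> {1..n}" "m \<in> K E p" "k < m" "dn E p k"
  shows "end_time s T E p k + lmin / s \<le> end_time s T E p m"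
  using end_time_le_st_later[OF assms] st_plus_le_end_time[OF assms(1,2)] by simp

lemma reporting_cycles_unique:
  assumes "r \<in> {1..n}" "t' < t + lmin / s" "a \<in> reporting_cycles r t t'" "b \<in> reporting_cycles r t t'"
  shows "a = b"
proof -
  have False if "a' \<in> reporting_cycles r t t'" "b' \<in> reporting_cycles r t t'" "a' < b'"
    for a' b'
    using end_time_spaced[OF assms(1) _ that(3)] that assms(2)
    unfolding reporting_cycles_def by fastforce
  then show ?thesis
    using assms(3,4) by (metis linorder_neqE_nat)
qed

lemma card_reported_tasks_le_1:
  assumes "r \<in> {1..n}" "t' < t + lmin / s"
  shows "finite (tk E r ` reporting_cycles r t t')" "card (tk E r ` reporting_cycles r t t') \<le> 1"
proof -
  have "tk E r ` reporting_cycles r t t' \<subseteq> {tk E r m}" if "m \<in> reporting_cycles r t t'" for m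
    using reporting_cycles_unique[OF assms that] by auto
  then obtain x where x: "tk E r ` reporting_cycles r t t' \<subseteq> {x}"
    by blast
  then show "finite (tk E r ` reporting_cycles r t t')"
    by (rule finite_subset) simp
  show "card (tk E r ` reporting_cycles r t t') \<le> 1"
    using card_mono[OF _ x] by simp
qed

lemma no_reports_during_cycle:
  assumes "p \<in> {1..n}" "k \<in> K E p" "dn E p k" "t' < end_time s T E p k"
  shows "reporting_cycles p (st E p k) t' = {}"
proof -
  have False if m: "m \<in> reporting_cycles p (st E p k) t'" for m
  proof -
    have mm: "m \<in> K E p" "dn E p m" "st E p k < end_time s T E p m" "end_time s T E p m \<le> t'"
      using m unfolding reporting_cycles_def by auto
    consider "m < k" | "m = k" | "k < m" by linarith
    then show False
    proof cases
      case 1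
      then show ?thesis
        using end_time_le_st_later[OF assms(1,2) 1 mm(2)] mm by simp
    next
      case 3
      then show ?thesis
        using end_time_spaced[OF assms(1) mm(1) 3 assms(3)] mm assms(4) lmin_div_s_pos
        by linarith
    qed (use mm assms in simp)
  qed
  then show ?thesis by blast
qed

lemma card_ahead_scheduled:
  assumes "r \<in> {1..n}" "m \<in> K E r" "cost T (tk E r m) = lmin"
    and "n\<^sup>2 \<le> card (lmin_pending (st E r m))"
  shows "card (ahead (tk E r m) (st E r m)) = r * n - 1"
proof -
  let ?t = "st E r m"
  have list: "Lmin_list n s lmin T E ?t = sorted_by_arrival (arr T) (lmin_pending ?t)"
    unfolding Lmin_list_def lmin_pending_def ..
  have long: "n\<^sup>2 \<le> length (Lmin_list n s lmin T E ?t)"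
    using assms(4) finite_lmin_pending unfolding list by simp
  have "tk E r m \<notin> set (Lmax_list n s lmax T E ?t)"
    using assms(3) lmin_less_lmax finite_pending unfolding Lmax_list_def by simp
  then have tk: "tk E r m = sorted_by_arrival (arr T) (lmin_pending ?t) ! (r * n - 1)"
    using burst_choice_long_min_list[OF choice_at_st[OF assms(1,2), unfolded choice_at_def]
        assms(1) long] unfolding list by simp
  have "r * n - 1 < length (sorted_by_arrival (arr T) (lmin_pending ?t))"
    using long position_less_square[OF assms(1)] unfolding list by simp
  then show ?thesis
    unfolding ahead_def tk by (rule card_before_nth_sorted_by_arrival[OF finite_lmin_pending])
qed

lemma ahead_antimono:
  assumes "t \<le> t'" "arr T \<tau> \<le> t"
  shows "ahead \<tau> t' \<subseteq> ahead \<tau> t"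
proof
  fix \<sigma> assume \<sigma>: "\<sigma> \<in> ahead \<tau> t'"
  then have "arr T \<sigma> \<le> arr T \<tau>"
    unfolding ahead_def by (auto simp: less_prod_def)
  then show "\<sigma> \<in> ahead \<tau> t"
    using \<sigma> assms unfolding ahead_def lmin_pending_def pending_def by force
qed

lemma ahead_diff_reported:
  assumes "t \<le> t'"
  shows "ahead \<tau> t - ahead \<tau> t' \<subseteq> (\<Union>r\<in>{1..n}. tk E r ` reporting_cycles r t t')"
proof
  fix \<sigma> assume \<sigma>: "\<sigma> \<in> ahead \<tau> t - ahead \<tau> t'"
  then have "\<sigma> \<in> pending n s T E t" "\<sigma> \<notin> pending n s T E t'"
    unfolding ahead_def lmin_pending_def by auto
  then obtain t'' where "t'' \<le> t'" "reported n s T E \<sigma> t''" "t < t''"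
    using assms unfolding pending_def by force
  then show "\<sigma> \<in> (\<Union>r\<in>{1..n}. tk E r ` reporting_cycles r t t')"
    unfolding reported_def reporting_cycles_def by force
qed

lemma card_ahead_diff_le:
  assumes p: "p \<in> {1..n}" "k \<in> K E p" "dn E p k"
    and t: "st E p k \<le> t" "t < st E p k + lmin / s"
  shows "card (ahead \<tau> (st E p k) - ahead \<tau> t) \<le> n - 1"
proof -
  let ?reported = "\<Union>r\<in>{1..n} - {p}. tk E r ` reporting_cycles r (st E p k) t"
  have "t < end_time s T E p k"
    using t(2) st_plus_le_end_time[OF p(1,2)] by linarith
  then have none: "reporting_cycles p (st E p k) t = {}"
    by (rule no_reports_during_cycle[OF p])
  have "ahead \<tau> (st E p k) - ahead \<tau> t \<subseteq> ?reported"
  proof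
    fix \<sigma> assume "\<sigma> \<in> ahead \<tau> (st E p k) - ahead \<tau> t"
    then obtain r where "r \<in> {1..n}" "\<sigma> \<in> tk E r ` reporting_cycles r (st E p k) t"
      using ahead_diff_reported[OF t(1)] by blast
    moreover have "r \<noteq> p"
      using calculation(2) none by auto
    ultimately show "\<sigma> \<in> ?reported"
      by blast
  qed
  moreover have "finite ?reported"
    by (intro finite_UN_I card_reported_tasks_le_1(1)[OF _ t(2)]) simp_all
  moreover have "card ?reported \<le> n - 1"
  proof -
    have "card ?reported \<le> (\<Sum>r\<in>{1..n} - {p}. card (tk E r ` reporting_cycles r (st E p k) t))"
      by (rule card_UN_le) simp
    also have "\<dots> \<le> (\<Sum>r\<in>{1..n} - {p}. 1)"
      by (intro sum_mono card_reported_tasks_le_1(2)[OF _ t(2)]) simp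
    finally show ?thesis
      using p(1) by simp
  qed
  ultimately show ?thesis
    by (meson card_mono le_trans)
qed

lemma abs_exec_in_start_mem:
  assumes "abs_exec_in n s T E I \<tau> p k"
  shows "st E p k \<in> I"
proof -
  have "st E p k + lmin / s \<le> end_time s T E p k"
    using assms st_plus_le_end_time unfolding abs_exec_in_def by blast
  then show ?thesis
    using assms lmin_div_s_pos unfolding abs_exec_in_def by auto
qed

lemma scheduled_lmin_task_unique:
  assumes p: "p \<in> {1..n}" "k \<in> K E p" "dn E p k"
    and q: "q \<in> {1..n}" "j \<in> K E q" "dn E q j"
    and same: "tk E p k = \<tau>" "tk E q j = \<tau>" "cost T \<tau> = lmin"
    and order: "st E p k \<le> st E q j"
    and busy: "n\<^sup>2 \<le> card (lmin_pending (st E p k))" "n\<^sup>2 \<le> card (lmin_pending (st E q j))"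
  shows "(p, k) = (q, j)"
proof -
  define t1 t2 e1 where "t1 = st E p k" and "t2 = st E q j" and "e1 = end_time s T E p k"
  have e1: "e1 = t1 + lmin / s"
    unfolding e1_def t1_def end_time_def using same by simp
  have "\<tau> \<in> pending n s T E t2" "reported n s T E \<tau> e1"
    using scheduled_pending[OF q(1,2)] p same unfolding t2_def e1_def reported_def by auto
  then have t2_e1: "t2 < e1"
    by (rule pending_before_report)
  have "\<tau> \<in> pending n s T E t1"
    using scheduled_pending[OF p(1,2)] same unfolding t1_def by simp
  then have ahead_sub: "ahead \<tau> t2 \<subseteq> ahead \<tau> t1"
    using ahead_antimono order unfolding t1_def t2_def pending_def by blast
  have "st E q j < st E p k + lmin / s"
    using t2_e1 unfolding e1 t1_def t2_def .
  then have lost: "card (ahead \<tau> t1 - ahead \<tau> t2) \<le> n - 1"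
    unfolding t1_def t2_def by (rule card_ahead_diff_le[OF p order])
  have rank1: "card (ahead \<tau> t1) = p * n - 1"
    using card_ahead_scheduled[OF p(1,2) _ busy(1)] same(1,3) unfolding t1_def by simp
  have rank2: "card (ahead \<tau> t2) = q * n - 1"
    using card_ahead_scheduled[OF q(1,2) _ busy(2)] same(2,3) unfolding t2_def by simp
  have finite1: "finite (ahead \<tau> t1)"
    using finite_lmin_pending unfolding ahead_def by simp
  have "card (ahead \<tau> t1 - ahead \<tau> t2) = card (ahead \<tau> t1) - card (ahead \<tau> t2)"
    using card_Diff_subset[OF finite_subset[OF ahead_sub finite1] ahead_sub] .
  moreover have "card (ahead \<tau> t2) \<le> card (ahead \<tau> t1)"
    using card_mono[OF finite1 ahead_sub] .
  ultimately have "q * n - 1 \<le> p * n - 1" "(p * n - 1) - (q * n - 1) \<le> n - 1"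
    using lost unfolding rank1 rank2 by simp_all
  then have pq: "p = q"
    by (rule eq_of_position_window[OF p(1) q(1)])
  moreover have "k = j"
  proof (rule linorder_cases[of k j])
    assume "k < j"
    then show ?thesis
      using end_time_le_st_later[OF p(1) q(2)[folded pq] _ p(3)] t2_e1
      unfolding e1_def t2_def pq by simp
  next
    assume "j < k"
    then have "end_time s T E q j \<le> st E q k"
      using end_time_le_st_later[OF q(1) p(2)[unfolded pq] _ q(3)] by simp
    then show ?thesis
      using st_plus_le_end_time[OF q(1,2)] order lmin_div_s_pos unfolding pq by linarith
  qed
  ultimately show ?thesis by simp
qed

end

theorem lemma12:
  fixes n :: nat and s lmin lmax :: real and T :: task_env and E :: exec and I :: "real set"
  assumes "n \<ge> 1" and "s > 1" and "0 < lmin" and "lmin < lmax"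
    and "\<forall>\<tau>\<in>inj T. cost T \<tau> = lmin \<or> cost T \<tau> = lmax"
    and "\<forall>t. finite {\<tau> \<in> inj T. arr T \<tau> \<le> t}"
    and "valid_exec n s lmin lmax T E"
    and "\<forall>x\<in>I. \<forall>z\<in>I. \<forall>y. x \<le> y \<and> y \<le> z \<longrightarrow> y \<in> I"
    and "\<forall>t\<in>I. card {\<tau> \<in> pending n s T E t. cost T \<tau> = lmin} \<ge> n^2"
  shows "\<forall>\<tau>\<in>inj T. cost T \<tau> = lmin \<longrightarrow>
           (\<forall>p k q j. abs_exec_in n s T E I \<tau> p k \<and> abs_exec_in n s T E I \<tau> q j
                      \<longrightarrow> (p, k) = (q, j))"
proof (intro ballI impI allI, elim conjE)
  interpret burst_execution n s lmin lmax T E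
    using assms(2-7) by unfold_locales auto
  have busy: "n\<^sup>2 \<le> card (lmin_pending (st E p k))" if "abs_exec_in n s T E I \<tau> p k" for \<tau> p k
    using assms(9) abs_exec_in_start_mem[OF that] unfolding lmin_pending_def by simp
  have ordered: "(p, k) = (q, j)"
    if "cost T \<tau> = lmin" "abs_exec_in n s T E I \<tau> p k" "abs_exec_in n s T E I \<tau> q j"
      "st E p k \<le> st E q j" for \<tau> p k q j
    using scheduled_lmin_task_unique[OF _ _ _ _ _ _ _ _ that(1,4) busy[OF that(2)] busy[OF that(3)]]
      that(2,3) unfolding abs_exec_in_def by blast
  fix \<tau> p k q j
  assume execs: "cost T \<tau> = lmin" "abs_exec_in n s T E I \<tau> p k" "abs_exec_in n s T E I \<tau> q j"
  consider "st E p k \<le> st E q j" | "st E q j \<le> st E p k"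
    by linarith
  then show "(p, k) = (q, j)"
  proof cases
    case 1
    then show ?thesis
      by (rule ordered[OF execs])
  next
    case 2
    then have "(q, j) = (p, k)"
      by (rule ordered[OF execs(1,3,2)])
    then show ?thesis
      by simp
  qed
qed

end
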